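(* Let $A$ be the $K\times K$ matrix with diagonal entries $\frac{2K-1}{K}$ and all off-diagonal entries $-\frac1K$. Then $A$ is invertible, so for any $\gamma_1,\ldots,\gamma_K\in\mathbb{R}$ the system $A\,(\Gamma^c_1,\ldots,\Gamma^c_K)^T=b$, with $b_j=\gamma_j+\frac1K\sum_{l=1}^{n}\Gamma_l+\frac{\Gamma_\infty}{K}$, has a unique solution. For this solution and every $N\ge1$, the function $$\Psi_N(z)=\sum_{l=1}^{n}\Gamma_l\,\psi^{s*}_N(z,z_l)+\psi^*_{N,\infty}(z)+\sum_{j=1}^{K}\psi^*_{N,j}(z)$$ has circulation exactly $\gamma_j$ around $L_j$ for each $j=1,\ldots,K$.
   Context: Let $K\ge2$, circles $L_j=\{|z-c_j|=R_j\}$ with pairwise disjoint closed disks, $D$ the exterior of all closed disks, $T_j(z)=c_j+\frac{R_j^2}{\bar z-\bar c_j}$ the inversion in $L_j$ ($T_j(c_j)=\infty$, $T_j(\infty)=c_j$). Let $z_1,\ldots,z_n$ be finite points of $D$ with real circulations $\Gamma_1,\ldots,\Gamma_n$, and let $\Gamma_\infty\in\mathbb{R}$. For a starting point $p$ (a finite point of $D$, a center $c_j$, or $\infty$), the level-$M$ points of $p$ are the multiset $T_{i_1}\circ\cdots\circ T_{i_M}(p)$ over words with $i_k\ne i_{k+1}$ (level 0 is $p$). $\psi^s_N(z,z_l)=-\frac{1}{2\pi}\sum_{M=0}^{N}(-1)^M\sum_{\zeta\in\text{level }M\text{ of }z_l}\log|z-\zeta|$, $\psi^{s*}_N=\frac{(K-1)\psi^s_N+\psi^s_{N+1}}{K}$.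 $\psi_{N,\infty}(z)=-\frac{\Gamma_\infty}{2\pi}\sum_{M=1}^{N}(-1)^M\sum_{\zeta\in\text{level }M\text{ of }\infty}\log|z-\zeta|$, $\psi^*_{N,\infty}=\frac{(K-1)\psi_{N,\infty}+\psi_{N+1,\infty}}{K}$. $\psi_{N,j}(z)=-\frac{\Gamma^c_j}{2\pi}\sum_{M=0}^{N}(-1)^M\sum_{\zeta\in\text{level }M\text{ of }c_j,\ \zeta\ne\infty}\log|z-\zeta|$, $\psi^*_{N,j}=\frac{(K-1)\psi_{N,j}+\psi_{N+1,j}}{K}$. Circulation: for a finite sum $\psi(z)=-\frac{1}{2\pi}\sum_k\Gamma_k\log|z-\zeta_k|$ with no $\zeta_k$ on $L_j$, the circulation around $L_j$ is the sum of $\Gamma_k$ over $\zeta_k$ in the open disk bounded by $L_j$ (equivalently $-\oint_{L_j}\partial\psi/\partial n\,ds$, counterclockwise, outward normal). *)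

theory Defs
  imports Complex_Main "HOL-Library.Multiset"
begin

datatype epoint = Fin complex | Infty

definition inv_circ :: "complex \<Rightarrow> real \<Rightarrow> epoint \<Rightarrow> epoint" where
  "inv_circ c r p = (case p of
      Infty \<Rightarrow> Fin c
    | Fin z \<Rightarrow> (if z = c then Infty else Fin (c + complex_of_real (r ^ 2) / cnj (z - c))))"

definition words :: "nat \<Rightarrow> nat \<Rightarrow> nat list set" where
  "words K M = {w. length w = M \<and> set w \<subseteq> {1..K} \<and> (\<forall>k. Suc k < M \<longrightarrow> w ! k \<noteq> w ! Suc k)}"

definition level :: "(nat \<Rightarrow> complex) \<Rightarrow> (nat \<Rightarrow> real) \<Rightarrow> nat \<Rightarrow> nat \<Rightarrow> epoint \<Rightarrow> epoint multiset" where
  "level c R K M p = image_mset (\<lambda>w. foldr (\<lambda>i q. inv_circ (c i) (R i) q) w p) (mset_set (words K M))"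

definition logsum :: "complex \<Rightarrow> epoint multiset \<Rightarrow> real" where
  "logsum z Z = (\<Sum>\<zeta>\<in>#Z. (case \<zeta> of Fin a \<Rightarrow> ln (cmod (z - a)) | Infty \<Rightarrow> 0))"

definition psi_s :: "(nat \<Rightarrow> complex) \<Rightarrow> (nat \<Rightarrow> real) \<Rightarrow> nat \<Rightarrow> nat \<Rightarrow> complex \<Rightarrow> complex \<Rightarrow> real" where
  "psi_s c R K N zl z = - (1 / (2 * pi)) * (\<Sum>M\<le>N. (-1) ^ M * logsum z (level c R K M (Fin zl)))"

definition psi_s_star :: "(nat \<Rightarrow> complex) \<Rightarrow> (nat \<Rightarrow> real) \<Rightarrow> nat \<Rightarrow> nat \<Rightarrow> complex \<Rightarrow> complex \<Rightarrow> real" where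
  "psi_s_star c R K N zl z = ((real K - 1) * psi_s c R K N zl z + psi_s c R K (Suc N) zl z) / real K"

definition psi_inf :: "(nat \<Rightarrow> complex) \<Rightarrow> (nat \<Rightarrow> real) \<Rightarrow> nat \<Rightarrow> real \<Rightarrow> nat \<Rightarrow> complex \<Rightarrow> real" where
  "psi_inf c R K Ginf N z = - (Ginf / (2 * pi)) * (\<Sum>M\<in>{1..N}. (-1) ^ M * logsum z (level c R K M Infty))"

definition psi_inf_star :: "(nat \<Rightarrow> complex) \<Rightarrow> (nat \<Rightarrow> real) \<Rightarrow> nat \<Rightarrow> real \<Rightarrow> nat \<Rightarrow> complex \<Rightarrow> real" where
  "psi_inf_star c R K Ginf N z = ((real K - 1) * psi_inf c R K Ginf N z + psi_inf c R K Ginf (Suc N) z) / real K"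

definition psi_c :: "(nat \<Rightarrow> complex) \<Rightarrow> (nat \<Rightarrow> real) \<Rightarrow> nat \<Rightarrow> real \<Rightarrow> nat \<Rightarrow> nat \<Rightarrow> complex \<Rightarrow> real" where
  "psi_c c R K Gcj j N z = - (Gcj / (2 * pi)) * (\<Sum>M\<le>N. (-1) ^ M * logsum z (level c R K M (Fin (c j))))"

definition psi_c_star :: "(nat \<Rightarrow> complex) \<Rightarrow> (nat \<Rightarrow> real) \<Rightarrow> nat \<Rightarrow> real \<Rightarrow> nat \<Rightarrow> nat \<Rightarrow> complex \<Rightarrow> real" where
  "psi_c_star c R K Gcj j N z = ((real K - 1) * psi_c c R K Gcj j N z + psi_c c R K Gcj j (Suc N) z) / real K"

definition Psi :: "(nat \<Rightarrow> complex) \<Rightarrow> (nat \<Rightarrow> real) \<Rightarrow> nat \<Rightarrow> nat \<Rightarrow> (nat \<Rightarrow> complex) \<Rightarrow> (nat \<Rightarrow> real)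
    \<Rightarrow> real \<Rightarrow> (nat \<Rightarrow> real) \<Rightarrow> nat \<Rightarrow> complex \<Rightarrow> real" where
  "Psi c R K n zs G Ginf Gc N z =
     (\<Sum>l\<in>{1..n}. G l * psi_s_star c R K N (zs l) z) + psi_inf_star c R K Ginf N z
     + (\<Sum>j\<in>{1..K}. psi_c_star c R K (Gc j) j N z)"

text \<open>Circulation: f is a finite sum -1/(2 pi) * sum_k Gamma_k log|z - zeta_k| (given by a multiset of
  (Gamma_k, zeta_k)) with no zeta_k on the circle |z - cj| = Rj, and the circulation is the sum
  of the Gamma_k with zeta_k in the open disk.\<close>
definition has_circulation :: "(complex \<Rightarrow> real) \<Rightarrow> complex \<Rightarrow> real \<Rightarrow> real \<Rightarrow> bool" where
  "has_circulation f cj Rj g \<longleftrightarrow>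
     (\<exists>Z :: (real \<times> complex) multiset.
        (\<forall>z. f z = - (1 / (2 * pi)) * (\<Sum>(w, \<zeta>)\<in>#Z. w * ln (cmod (z - \<zeta>))))
      \<and> (\<forall>(w, \<zeta>)\<in>#Z. cmod (\<zeta> - cj) \<noteq> Rj)
      \<and> (\<Sum>(w, \<zeta>)\<in>#filter_mset (\<lambda>(w, \<zeta>). cmod (\<zeta> - cj) < Rj) Z. w) = g)"

definition Amat :: "nat \<Rightarrow> nat \<Rightarrow> nat \<Rightarrow> real" where
  "Amat K i j = (if i = j then (2 * real K - 1) / real K else - 1 / real K)"

end

theory Submission
  imports Defs
begin

text \<open>Inversion in L_i maps the exterior of disk i into disk i, and a point of disk i lies outside
  every other disk. Hence for p outside all disks the level-M point T_i1 ... T_iM (p) lies in the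
  disk of i1, so for M >= 1 every disk contains exactly (K-1)^(M-1) level-M points, and the N-th
  partial sum has circulation S_N = sum_{M=1..N} (-1)^M (K-1)^(M-1) around each circle. The starred
  average ((K-1) S_N + S_(N+1)) / K equals -1/K for every N. Starting from a centre c_j, only levels
  0 and 1 deviate from this count, adding 2 to the circulation around L_j. Thus Psi_N has
  circulation (A Gc)_k - (sum_l Gamma_l + Gamma_inf)/K around L_k, and A x = 2x - (sum x)/K is
  inverted explicitly.\<close>

lemma has_circulation_cong:
  "has_circulation f c r g \<Longrightarrow> (\<And>z. f z = f' z) \<Longrightarrow> g = g' \<Longrightarrow> has_circulation f' c r g'"
  unfolding has_circulation_def by metis

lemma has_circulation_zero: "has_circulation (\<lambda>z. 0) c r 0"
  unfolding has_circulation_def by (rule exI[of _ "{#}"]) simp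

lemma has_circulation_add:
  assumes "has_circulation f c r x" "has_circulation g c r y"
  shows "has_circulation (\<lambda>z. f z + g z) c r (x + y)"
proof -
  from assms obtain Z1 Z2 where
    "\<forall>z. f z = - (1 / (2 * pi)) * (\<Sum>(w, \<zeta>)\<in>#Z1. w * ln (cmod (z - \<zeta>)))"
    "\<forall>(w, \<zeta>)\<in>#Z1. cmod (\<zeta> - c) \<noteq> r"
    "(\<Sum>(w, \<zeta>)\<in>#filter_mset (\<lambda>(w, \<zeta>). cmod (\<zeta> - c) < r) Z1. w) = x"
    "\<forall>z. g z = - (1 / (2 * pi)) * (\<Sum>(w, \<zeta>)\<in>#Z2. w * ln (cmod (z - \<zeta>)))"
    "\<forall>(w, \<zeta>)\<in>#Z2. cmod (\<zeta> - c) \<noteq> r"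
    "(\<Sum>(w, \<zeta>)\<in>#filter_mset (\<lambda>(w, \<zeta>). cmod (\<zeta> - c) < r) Z2. w) = y"
    unfolding has_circulation_def by blast
  then show ?thesis
    unfolding has_circulation_def by (intro exI[of _ "Z1 + Z2"]) (auto simp: algebra_simps)
qed

lemma has_circulation_scale:
  assumes "has_circulation f c r x"
  shows "has_circulation (\<lambda>z. a * f z) c r (a * x)"
proof -
  from assms obtain Z where
    "\<forall>z. f z = - (1 / (2 * pi)) * (\<Sum>(w, \<zeta>)\<in>#Z. w * ln (cmod (z - \<zeta>)))"
    "\<forall>(w, \<zeta>)\<in>#Z. cmod (\<zeta> - c) \<noteq> r"
    "(\<Sum>(w, \<zeta>)\<in>#filter_mset (\<lambda>(w, \<zeta>). cmod (\<zeta> - c) < r) Z. w) = x"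
    unfolding has_circulation_def by blast
  then show ?thesis
    unfolding has_circulation_def
    by (intro exI[of _ "image_mset (\<lambda>(w, \<zeta>). (a * w, \<zeta>)) Z"])
       (auto simp: filter_mset_image_mset sum_mset_distrib_left case_prod_beta'
             image_mset.compositionality o_def mult.assoc)
qed

lemma has_circulation_sum:
  assumes "finite A" "\<And>i. i \<in> A \<Longrightarrow> has_circulation (f i) c r (x i)"
  shows "has_circulation (\<lambda>z. \<Sum>i\<in>A. f i z) c r (\<Sum>i\<in>A. x i)"
  using assms by (induction A rule: finite_induct) (auto intro: has_circulation_zero has_circulation_add)

lemma has_circulation_star_avg:
  assumes "has_circulation f c r x" "has_circulation g c r y"
    and "\<And>z. h z = ((t - 1) * f z + g z) / t"
  shows "has_circulation h c r (((t - 1) * x + y) / t)"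
proof -
  have "has_circulation (\<lambda>z. ((t - 1) / t) * f z + (1 / t) * g z) c r (((t - 1) / t) * x + (1 / t) * y)"
    using assms(1,2) by (intro has_circulation_add has_circulation_scale)
  then show ?thesis by (rule has_circulation_cong) (simp_all add: assms(3) add_divide_distrib)
qed

lemma has_circulation_log:
  assumes "cmod (a - c) \<noteq> r"
  shows "has_circulation (\<lambda>z. - (1 / (2 * pi)) * ln (cmod (z - a))) c r (if cmod (a - c) < r then 1 else 0)"
  unfolding has_circulation_def using assms by (intro exI[of _ "{#(1, a)#}"]) auto

lemma has_circulation_logsum:
  assumes "\<forall>p\<in>#P. case p of Fin a \<Rightarrow> cmod (a - c) \<noteq> r | Infty \<Rightarrow> True"
  shows "has_circulation (\<lambda>z. - (1 / (2 * pi)) * logsum z P) c r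
           (size (filter_mset (\<lambda>p. case p of Fin a \<Rightarrow> cmod (a - c) < r | Infty \<Rightarrow> False) P))"
  using assms
proof (induction P)
  case empty
  show ?case using has_circulation_zero by (simp add: logsum_def)
next
  case (add p P)
  then have IH: "has_circulation (\<lambda>z. - (1 / (2 * pi)) * logsum z P) c r
      (size (filter_mset (\<lambda>p. case p of Fin a \<Rightarrow> cmod (a - c) < r | Infty \<Rightarrow> False) P))"
    by simp
  show ?case
  proof (cases p)
    case (Fin a)
    with add.prems have "has_circulation (\<lambda>z. - (1 / (2 * pi)) * ln (cmod (z - a))) c r
        (if cmod (a - c) < r then 1 else 0)"
      by (intro has_circulation_log) simp
    from has_circulation_add[OF this IH] show ?thesis
      by (rule has_circulation_cong) (auto simp: Fin logsum_def algebra_simps)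
  next
    case Infty
    with IH show ?thesis by (simp add: logsum_def)
  qed
qed

lemma words_altdef: "words K M = {w. length w = M \<and> set w \<subseteq> {1..K} \<and> distinct_adj w}"
  by (auto simp: words_def distinct_adj_conv_nth)

lemma finite_words: "finite (words K M)"
proof (rule finite_subset)
  show "words K M \<subseteq> {w. set w \<subseteq> {1..K} \<and> length w = M}" by (auto simp: words_altdef)
qed (simp add: finite_lists_length_eq)

lemma words_0: "words K 0 = {[]}"
  by (auto simp: words_altdef)

lemma Cons_in_words_iff:
  "i # w \<in> words K (Suc M) \<longleftrightarrow> i \<in> {1..K} \<and> w \<in> words K M \<and> (w = [] \<or> hd w \<noteq> i)"
  by (auto simp: words_altdef distinct_adj_Cons)

lemma butlast_in_words: "w \<in> words K M \<Longrightarrow> butlast w \<in> words K (M - 1)"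
  by (cases w rule: rev_cases) (auto simp: words_altdef distinct_adj_append_iff)

lemma words_length: "w \<in> words K M \<Longrightarrow> length w = M"
  by (simp add: words_def)

lemma last_in_words: "w \<in> words K M \<Longrightarrow> w \<noteq> [] \<Longrightarrow> last w \<in> {1..K}"
  unfolding words_altdef using last_in_set by blast

lemma card_words_hd: "k \<in> {1..K} \<Longrightarrow> card {w \<in> words K (Suc M). hd w = k} = (K - 1) ^ M"
proof (induction M arbitrary: k)
  case 0
  have "{w \<in> words K (Suc 0). hd w = k} = {[k]}"
    using 0 by (auto simp: words_altdef length_Suc_conv)
  then show ?case by simp
next
  case (Suc m)
  have "{w \<in> words K (Suc (Suc m)). hd w = k} =
      (#) k ` (\<Union>i\<in>{1..K} - {k}. {w \<in> words K (Suc m). hd w = i})"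
    using Suc.prems by (auto simp: words_altdef distinct_adj_Cons length_Suc_conv)
  also have "card \<dots> = (\<Sum>i\<in>{1..K} - {k}. card {w \<in> words K (Suc m). hd w = i})"
    by (subst card_image) (auto intro!: card_UN_disjoint simp: finite_words)
  also have "\<dots> = (K - 1) ^ Suc m"
    using Suc by simp
  finally show ?case .
qed

definition alt_sum :: "real \<Rightarrow> nat \<Rightarrow> real" where
  "alt_sum x N = (\<Sum>M\<in>{1..N}. (-1) ^ M * x ^ (M - 1))"

lemma alt_sum_Suc: "alt_sum x (Suc N) = alt_sum x N - (- x) ^ N"
  unfolding alt_sum_def by (subst sum.cl_ivl_Suc) (simp add: power_minus[of x])

lemma alt_sum_closed_form: "(x + 1) * alt_sum x N = (- x) ^ N - 1"
proof (induction N)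
  case (Suc N)
  then show ?case by (simp add: alt_sum_Suc algebra_simps)
qed (simp add: alt_sum_def)

lemma alt_sum_star_avg: "x * alt_sum x N + alt_sum x (Suc N) = -1"
  using alt_sum_closed_form[of x N] by (simp add: alt_sum_Suc algebra_simps)

lemma sum_atMost_alt_sum: "(\<Sum>M\<le>N. if M = 0 then 0 else (-1) ^ M * x ^ (M - 1)) = alt_sum x N"
proof -
  have "{..N} = insert 0 {1..N}" by auto
  then show ?thesis by (simp add: alt_sum_def)
qed

lemma Amat_mult:
  assumes "j \<in> {1..K}"
  shows "(\<Sum>i\<in>{1..K}. Amat K j i * x i) = 2 * x j - (\<Sum>i\<in>{1..K}. x i) / real K"
proof -
  have "Amat K j i * x i = (if i = j then 2 * x i else 0) - x i / real K" for i
    using assms by (auto simp: Amat_def field_simps)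
  then show ?thesis
    using assms by (simp add: sum_subtractf sum_divide_distrib)
qed

lemma Amat_system_iff:
  assumes "K \<ge> 1"
  shows "(\<forall>j\<in>{1..K}. (\<Sum>i\<in>{1..K}. Amat K j i * x i) = b j) \<longleftrightarrow>
         (\<forall>j\<in>{1..K}. x j = (b j + (\<Sum>i\<in>{1..K}. b i) / real K) / 2)"
proof
  assume sys: "\<forall>j\<in>{1..K}. (\<Sum>i\<in>{1..K}. Amat K j i * x i) = b j"
  have "(\<Sum>j\<in>{1..K}. b j) = (\<Sum>j\<in>{1..K}. 2 * x j - (\<Sum>i\<in>{1..K}. x i) / real K)"
    using sys Amat_mult by simp
  also have "\<dots> = (\<Sum>i\<in>{1..K}. x i)"
    using assms by (simp add: sum_subtractf sum_distrib_left[symmetric])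
  finally show "\<forall>j\<in>{1..K}. x j = (b j + (\<Sum>i\<in>{1..K}. b i) / real K) / 2"
    using sys Amat_mult by auto
next
  assume sol: "\<forall>j\<in>{1..K}. x j = (b j + (\<Sum>i\<in>{1..K}. b i) / real K) / 2"
  then have "(\<Sum>i\<in>{1..K}. x i) = (\<Sum>i\<in>{1..K}. b i / 2 + (\<Sum>i\<in>{1..K}. b i) / real K / 2)"
    by (simp add: add_divide_distrib)
  also have "\<dots> = (\<Sum>i\<in>{1..K}. b i)"
    using assms by (simp add: sum.distrib sum_divide_distrib[symmetric])
  finally have sum_eq: "(\<Sum>i\<in>{1..K}. x i) = (\<Sum>i\<in>{1..K}. b i)" .
  show "\<forall>j\<in>{1..K}. (\<Sum>i\<in>{1..K}. Amat K j i * x i) = b j"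
  proof
    fix j assume j: "j \<in> {1..K}"
    show "(\<Sum>i\<in>{1..K}. Amat K j i * x i) = b j"
      by (simp only: Amat_mult[OF j] sum_eq sol[rule_format, OF j]) (simp add: field_simps)
  qed
qed

locale disjoint_disks =
  fixes K :: nat and c :: "nat \<Rightarrow> complex" and R :: "nat \<Rightarrow> real"
  assumes radius_pos: "\<And>j. j \<in> {1..K} \<Longrightarrow> R j > 0"
    and disks_apart: "\<And>i j. i \<in> {1..K} \<Longrightarrow> j \<in> {1..K} \<Longrightarrow> i \<noteq> j \<Longrightarrow> cmod (c i - c j) > R i + R j"
begin

definition in_disk :: "nat \<Rightarrow> epoint \<Rightarrow> bool" where
  "in_disk k p \<longleftrightarrow> (case p of Fin a \<Rightarrow> cmod (a - c k) < R k | Infty \<Rightarrow> False)"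

definition outside_disk :: "nat \<Rightarrow> epoint \<Rightarrow> bool" where
  "outside_disk k p \<longleftrightarrow> (case p of Fin a \<Rightarrow> cmod (a - c k) > R k | Infty \<Rightarrow> True)"

definition lands_in :: "nat \<Rightarrow> epoint \<Rightarrow> bool" where
  "lands_in i p \<longleftrightarrow> in_disk i p \<and> (\<forall>k\<in>{1..K}. k \<noteq> i \<longrightarrow> outside_disk k p)"

definition inv_word :: "nat list \<Rightarrow> epoint \<Rightarrow> epoint" where
  "inv_word w p = foldr (\<lambda>i. inv_circ (c i) (R i)) w p"

definition count_in_disk :: "nat \<Rightarrow> nat \<Rightarrow> epoint \<Rightarrow> nat" where
  "count_in_disk k M p = card {w \<in> words K M. in_disk k (inv_word w p)}"

lemma level_eq: "level c R K M p = image_mset (\<lambda>w. inv_word w p) (mset_set (words K M))"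
  by (simp add: level_def inv_word_def)

lemma in_disk_imp_lands_in:
  assumes "i \<in> {1..K}" "in_disk i p"
  shows "lands_in i p"
proof -
  obtain a where p: "p = Fin a" and a: "cmod (a - c i) < R i"
    using assms(2) by (auto simp: in_disk_def split: epoint.splits)
  have "cmod (a - c k) > R k" if "k \<in> {1..K}" "k \<noteq> i" for k
  proof -
    have "cmod (c i - c k) \<le> cmod (a - c i) + cmod (a - c k)"
      using norm_triangle_ineq4[of "a - c k" "a - c i"] by (simp add: algebra_simps)
    with a disks_apart[OF assms(1) that(1)] that(2) show ?thesis by linarith
  qed
  with assms(2) show ?thesis by (simp add: lands_in_def outside_disk_def p)
qed

lemma lands_in_iff:
  assumes "lands_in i p" "k \<in> {1..K}"
  shows "in_disk k p \<longleftrightarrow> k = i" "in_disk k p \<or> outside_disk k p"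
  using assms by (auto simp: lands_in_def in_disk_def outside_disk_def split: epoint.splits)

lemma outside_disk_inv_circ:
  assumes "i \<in> {1..K}" "outside_disk i p"
  shows "in_disk i (inv_circ (c i) (R i) p)"
proof (cases p)
  case Infty
  then show ?thesis using radius_pos[OF assms(1)] by (simp add: inv_circ_def in_disk_def)
next
  case (Fin z)
  have r: "R i > 0" using radius_pos[OF assms(1)] .
  have d: "cmod (z - c i) > R i" using assms(2) by (simp add: outside_disk_def Fin)
  have "cmod (complex_of_real (R i ^ 2) / cnj (z - c i)) = R i ^ 2 / cmod (z - c i)"
    by (simp add: norm_divide norm_power del: complex_cnj_diff)
  also have "\<dots> < R i" using d r by (simp add: divide_less_eq power2_eq_square)
  finally show ?thesis using d r by (auto simp: inv_circ_def in_disk_def Fin)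
qed

text \<open>A point outside the disk of the last letter is pushed, letter by letter, into the disk of
  the current first letter; disjointness keeps it outside all the others.\<close>
lemma lands_in_inv_word:
  assumes "w \<in> words K M" "w \<noteq> []" "outside_disk (last w) p"
  shows "lands_in (hd w) (inv_word w p)"
  using assms
proof (induction w arbitrary: M)
  case (Cons i w)
  then obtain M' where M: "M = Suc M'" using words_length by fastforce
  with Cons.prems(1) have i: "i \<in> {1..K}" and w: "w \<in> words K M'" and hd: "w = [] \<or> hd w \<noteq> i"
    by (auto simp: Cons_in_words_iff)
  have "outside_disk i (inv_word w p)"
  proof (cases "w = []")
    case True
    with Cons.prems(3) show ?thesis by (simp add: inv_word_def)
  next
    case False
    with Cons.IH[OF w] Cons.prems(3) have "lands_in (hd w) (inv_word w p)" by simp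
    with hd i False show ?thesis by (auto simp: lands_in_def)
  qed
  from in_disk_imp_lands_in[OF i outside_disk_inv_circ[OF i this]] show ?case
    by (simp add: inv_word_def)
qed simp

lemma outside_disk_center:
  assumes "i \<in> {1..K}" "j \<in> {1..K}" "i \<noteq> j"
  shows "outside_disk i (Fin (c j))"
  using in_disk_imp_lands_in[OF assms(2)] radius_pos[OF assms(2)] assms
  by (simp add: lands_in_def in_disk_def)

text \<open>If the word ends in j, its last inversion sends the centre to infinity, and the
  remaining word acts on a point outside all disks.\<close>
lemma lands_in_inv_word_center:
  assumes "j \<in> {1..K}" "w \<in> words K M" "w \<noteq> []" "w \<noteq> [j]"
  shows "lands_in (hd w) (inv_word w (Fin (c j)))"
proof (cases "last w = j")
  case False
  with assms show ?thesis
    by (intro lands_in_inv_word outside_disk_center last_in_words) auto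
next
  case True
  then have w: "w = butlast w @ [j]" using assms(3) append_butlast_last_id by metis
  with assms(4) have "butlast w \<noteq> []" by auto
  moreover have "inv_word w (Fin (c j)) = inv_word (butlast w) Infty"
    by (subst w) (simp add: inv_word_def inv_circ_def)
  moreover have "hd (butlast w) = hd w"
    using \<open>butlast w \<noteq> []\<close> by (subst (2) w) simp
  ultimately show ?thesis
    using lands_in_inv_word[OF butlast_in_words[OF assms(2)]] by (simp add: outside_disk_def)
qed

lemma has_circulation_level_sum:
  assumes "finite A" "k \<in> {1..K}"
    and off_circle: "\<forall>M. \<forall>w\<in>words K M. in_disk k (inv_word w p) \<or> outside_disk k (inv_word w p)"
  shows "has_circulation (\<lambda>z. - (1 / (2 * pi)) * (\<Sum>M\<in>A. (-1) ^ M * logsum z (level c R K M p)))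
           (c k) (R k) (\<Sum>M\<in>A. (-1) ^ M * real (count_in_disk k M p))"
proof -
  have in_disk_eq: "(\<lambda>q. case q of Fin a \<Rightarrow> cmod (a - c k) < R k | Infty \<Rightarrow> False) = in_disk k"
    by (simp add: in_disk_def fun_eq_iff)
  have "has_circulation (\<lambda>z. - (1 / (2 * pi)) * logsum z (level c R K M p)) (c k) (R k)
          (count_in_disk k M p)" for M
  proof -
    have "\<forall>q\<in>#level c R K M p. case q of Fin a \<Rightarrow> cmod (a - c k) \<noteq> R k | Infty \<Rightarrow> True"
    proof
      fix q assume "q \<in># level c R K M p"
      then obtain w where w: "w \<in> words K M" and q: "q = inv_word w p"
        by (auto simp: level_eq finite_words)
      from off_circle[rule_format, OF w] show "case q of Fin a \<Rightarrow> cmod (a - c k) \<noteq> R k | Infty \<Rightarrow> True"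
        unfolding q by (auto simp: in_disk_def outside_disk_def split: epoint.splits)
    qed
    from has_circulation_logsum[OF this] show ?thesis
      by (simp add: in_disk_eq level_eq filter_mset_image_mset finite_words count_in_disk_def)
  qed
  then have "has_circulation (\<lambda>z. \<Sum>M\<in>A. (-1) ^ M * (- (1 / (2 * pi)) * logsum z (level c R K M p)))
      (c k) (R k) (\<Sum>M\<in>A. (-1) ^ M * real (count_in_disk k M p))"
    by (intro has_circulation_sum assms(1) has_circulation_scale)
  then show ?thesis
    by (rule has_circulation_cong) (simp_all add: sum_distrib_left algebra_simps)
qed

lemma count_in_disk_exterior:
  assumes "\<forall>i\<in>{1..K}. outside_disk i p" "k \<in> {1..K}"
  shows "count_in_disk k M p = (if M = 0 then 0 else (K - 1) ^ (M - 1))"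
    and "\<forall>M. \<forall>w\<in>words K M. in_disk k (inv_word w p) \<or> outside_disk k (inv_word w p)"
proof -
  have lands: "lands_in (hd w) (inv_word w p)" if "w \<in> words K M'" "w \<noteq> []" for w M'
    using lands_in_inv_word[OF that] assms(1) last_in_words[OF that] by blast
  show "count_in_disk k M p = (if M = 0 then 0 else (K - 1) ^ (M - 1))"
  proof (cases M)
    case 0
    have "outside_disk k p" using assms by blast
    then have "\<not> in_disk k p"
      by (auto simp: in_disk_def outside_disk_def split: epoint.splits)
    with 0 show ?thesis by (simp add: count_in_disk_def words_0 inv_word_def)
  next
    case (Suc m)
    then have "{w \<in> words K M. in_disk k (inv_word w p)} = {w \<in> words K (Suc m). hd w = k}"
      using lands lands_in_iff(1)[OF _ assms(2)] words_length by fastforce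
    with Suc card_words_hd[OF assms(2)] show ?thesis by (simp add: count_in_disk_def)
  qed
  show "\<forall>M. \<forall>w\<in>words K M. in_disk k (inv_word w p) \<or> outside_disk k (inv_word w p)"
  proof (intro allI ballI)
    fix M' w assume w: "w \<in> words K M'"
    show "in_disk k (inv_word w p) \<or> outside_disk k (inv_word w p)"
    proof (cases "w = []")
      case False
      from lands_in_iff(2)[OF lands[OF w False] assms(2)] show ?thesis .
    qed (use assms in \<open>simp add: inv_word_def\<close>)
  qed
qed

lemma count_in_disk_center:
  assumes "j \<in> {1..K}" "k \<in> {1..K}"
  shows "count_in_disk k M (Fin (c j)) =
           (if M = 0 then of_bool (k = j) else if M = 1 then of_bool (k \<noteq> j) else (K - 1) ^ (M - 1))"
    and "\<forall>M. \<forall>w\<in>words K M. in_disk k (inv_word w (Fin (c j))) \<or> outside_disk k (inv_word w (Fin (c j)))"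
proof -
  have center: "lands_in j (Fin (c j))"
    using in_disk_imp_lands_in[OF assms(1)] radius_pos[OF assms(1)] by (simp add: in_disk_def)
  have Infty: "inv_word [j] (Fin (c j)) = Infty"
    by (simp add: inv_word_def inv_circ_def)
  show "count_in_disk k M (Fin (c j)) =
      (if M = 0 then of_bool (k = j) else if M = 1 then of_bool (k \<noteq> j) else (K - 1) ^ (M - 1))"
  proof -
    consider "M = 0" | "M = 1" | m where "M = Suc (Suc m)"
      by (metis One_nat_def not0_implies_Suc)
    then show ?thesis
    proof cases
      case 1
      have "{w \<in> words K 0. in_disk k (inv_word w (Fin (c j)))} = (if k = j then {[]} else {})"
        using lands_in_iff(1)[OF center assms(2)] by (auto simp: words_0 inv_word_def)
      with 1 show ?thesis by (simp add: count_in_disk_def)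
    next
      case 2
      have one_letter: "in_disk k (inv_word [i] (Fin (c j))) \<longleftrightarrow> i = k \<and> i \<noteq> j"
        if "i \<in> {1..K}" for i
      proof (cases "i = j")
        case False
        with that have "lands_in i (inv_word [i] (Fin (c j)))"
          using lands_in_inv_word_center[OF assms(1), of "[i]" 1] by (simp add: words_altdef)
        with False show ?thesis using lands_in_iff(1)[OF _ assms(2)] by auto
      qed (simp add: Infty in_disk_def)
      have "words K 1 = (\<lambda>i. [i]) ` {1..K}"
        by (auto simp: words_altdef length_Suc_conv)
      then have "{w \<in> words K 1. in_disk k (inv_word w (Fin (c j)))} =
          (\<lambda>i. [i]) ` {i \<in> {1..K}. i = k \<and> i \<noteq> j}"
        using one_letter by auto
      also have "{i \<in> {1..K}. i = k \<and> i \<noteq> j} = (if k = j then {} else {k})"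
        using assms(2) by auto
      finally show ?thesis using 2 by (simp add: count_in_disk_def)
    next
      case 3
      then have "{w \<in> words K M. in_disk k (inv_word w (Fin (c j)))} = {w \<in> words K (Suc (Suc m)). hd w = k}"
        using lands_in_inv_word_center[OF assms(1)] lands_in_iff(1)[OF _ assms(2)] words_length
        by fastforce
      with 3 card_words_hd[OF assms(2)] show ?thesis by (simp add: count_in_disk_def)
    qed
  qed
  show "\<forall>M. \<forall>w\<in>words K M. in_disk k (inv_word w (Fin (c j))) \<or> outside_disk k (inv_word w (Fin (c j)))"
  proof (intro allI ballI)
    fix M' w assume w: "w \<in> words K M'"
    consider "w = []" | "w = [j]" | "w \<noteq> []" "w \<noteq> [j]" by blast
    then show "in_disk k (inv_word w (Fin (c j))) \<or> outside_disk k (inv_word w (Fin (c j)))"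
    proof cases
      case 1
      with lands_in_iff(2)[OF center assms(2)] show ?thesis by (simp add: inv_word_def)
    next
      case 2
      with Infty show ?thesis by (simp add: outside_disk_def)
    next
      case 3
      from lands_in_iff(2)[OF lands_in_inv_word_center[OF assms(1) w 3] assms(2)] show ?thesis .
    qed
  qed
qed

lemma signed_count_exterior:
  assumes "\<forall>i\<in>{1..K}. outside_disk i p" "k \<in> {1..K}"
  shows "(-1) ^ M * real (count_in_disk k M p) = (if M = 0 then 0 else (-1) ^ M * (real K - 1) ^ (M - 1))"
  using count_in_disk_exterior(1)[OF assms] assms(2) by (simp add: of_nat_diff)

lemma has_circulation_psi_s_star:
  assumes "\<forall>i\<in>{1..K}. outside_disk i (Fin zl)" "k \<in> {1..K}"
  shows "has_circulation (psi_s_star c R K N zl) (c k) (R k) (-1 / real K)"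
proof -
  have base: "has_circulation (psi_s c R K N' zl) (c k) (R k) (alt_sum (real K - 1) N')" for N'
  proof (rule has_circulation_cong[OF has_circulation_level_sum[OF finite_atMost[of N'] assms(2)
        count_in_disk_exterior(2)[OF assms]]])
    show "(\<Sum>M\<le>N'. (-1) ^ M * real (count_in_disk k M (Fin zl))) = alt_sum (real K - 1) N'"
      by (simp add: signed_count_exterior[OF assms] flip: sum_atMost_alt_sum)
  qed (simp add: psi_s_def)
  have "has_circulation (psi_s_star c R K N zl) (c k) (R k)
      (((real K - 1) * alt_sum (real K - 1) N + alt_sum (real K - 1) (Suc N)) / real K)"
    by (rule has_circulation_star_avg[OF base base]) (simp add: psi_s_star_def)
  then show ?thesis
    using alt_sum_star_avg[of "real K - 1" N] by simp
qed

lemma has_circulation_psi_inf_star: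
  assumes "k \<in> {1..K}"
  shows "has_circulation (psi_inf_star c R K Ginf N) (c k) (R k) (- Ginf / real K)"
proof -
  have ext: "\<forall>i\<in>{1..K}. outside_disk i Infty" by (simp add: outside_disk_def)
  have base: "has_circulation (psi_inf c R K Ginf N') (c k) (R k) (Ginf * alt_sum (real K - 1) N')" for N'
  proof (rule has_circulation_cong[OF has_circulation_scale[OF has_circulation_level_sum[OF
        finite_atLeastAtMost[of 1 N'] assms count_in_disk_exterior(2)[OF ext assms]], where a = Ginf]])
    show "Ginf * (\<Sum>M\<in>{1..N'}. (-1) ^ M * real (count_in_disk k M Infty)) = Ginf * alt_sum (real K - 1) N'"
      unfolding alt_sum_def by (intro arg_cong[where f = "(*) Ginf"] sum.cong)
        (auto simp: signed_count_exterior[OF ext assms])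
  qed (simp add: psi_inf_def)
  have "has_circulation (psi_inf_star c R K Ginf N) (c k) (R k)
      (((real K - 1) * (Ginf * alt_sum (real K - 1) N) + Ginf * alt_sum (real K - 1) (Suc N)) / real K)"
    by (rule has_circulation_star_avg[OF base base]) (simp add: psi_inf_star_def)
  moreover have "(real K - 1) * (Ginf * alt_sum (real K - 1) N) + Ginf * alt_sum (real K - 1) (Suc N) =
      Ginf * ((real K - 1) * alt_sum (real K - 1) N + alt_sum (real K - 1) (Suc N))"
    by (simp add: algebra_simps)
  ultimately show ?thesis
    using alt_sum_star_avg[of "real K - 1" N] by simp
qed

lemma signed_count_center:
  assumes "j \<in> {1..K}" "k \<in> {1..K}"
  shows "(-1) ^ M * real (count_in_disk k M (Fin (c j))) =
           (if M = 0 then 0 else (-1) ^ M * (real K - 1) ^ (M - 1)) + (if M \<le> 1 then of_bool (k = j) else 0)"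
proof -
  consider "M = 0" | "M = 1" | "M \<ge> 2" by linarith
  then show ?thesis
    using count_in_disk_center(1)[OF assms, of M] assms(2) by cases (auto simp: of_nat_diff)
qed

lemma has_circulation_psi_c_star:
  assumes "j \<in> {1..K}" "k \<in> {1..K}" "N \<ge> 1"
  shows "has_circulation (psi_c_star c R K Gcj j N) (c k) (R k) (Gcj * ((if k = j then 2 else 0) - 1 / real K))"
proof -
  define d :: real where "d = of_bool (k = j)"
  have base: "has_circulation (psi_c c R K Gcj j N') (c k) (R k) (Gcj * (alt_sum (real K - 1) N' + 2 * d))"
    if "N' \<ge> 1" for N'
  proof (rule has_circulation_cong[OF has_circulation_scale[OF has_circulation_level_sum[OF
        finite_atMost[of N'] assms(2) count_in_disk_center(2)[OF assms(1,2)]], where a = Gcj]])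
    have "(\<Sum>M\<le>N'. if M \<le> 1 then d else 0) = 2 * d"
      using that by (induction N') (auto simp: le_Suc_eq)
    then have "(\<Sum>M\<le>N'. (-1) ^ M * real (count_in_disk k M (Fin (c j)))) = alt_sum (real K - 1) N' + 2 * d"
      by (simp add: signed_count_center[OF assms(1,2), folded d_def] sum.distrib flip: sum_atMost_alt_sum)
    then show "Gcj * (\<Sum>M\<le>N'. (-1) ^ M * real (count_in_disk k M (Fin (c j)))) =
        Gcj * (alt_sum (real K - 1) N' + 2 * d)"
      by simp
  qed (simp add: psi_c_def)
  have "has_circulation (psi_c_star c R K Gcj j N) (c k) (R k)
      (((real K - 1) * (Gcj * (alt_sum (real K - 1) N + 2 * d))
        + Gcj * (alt_sum (real K - 1) (Suc N) + 2 * d)) / real K)"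
    by (rule has_circulation_star_avg[OF base[OF assms(3)] base]) (simp_all add: psi_c_star_def)
  moreover have "((real K - 1) * (Gcj * (alt_sum (real K - 1) N + 2 * d))
        + Gcj * (alt_sum (real K - 1) (Suc N) + 2 * d)) / real K =
      Gcj * ((if k = j then 2 else 0) - 1 / real K)"
  proof -
    have "(real K - 1) * (Gcj * (alt_sum (real K - 1) N + 2 * d))
          + Gcj * (alt_sum (real K - 1) (Suc N) + 2 * d) =
        Gcj * (((real K - 1) * alt_sum (real K - 1) N + alt_sum (real K - 1) (Suc N)) + 2 * d * real K)"
      by (simp add: algebra_simps)
    also have "\<dots> = Gcj * (2 * d * real K - 1)"
      using alt_sum_star_avg[of "real K - 1" N] by simp
    finally show ?thesis
      using assms(2) by (simp add: d_def field_simps)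
  qed
  ultimately show ?thesis by simp
qed

lemma has_circulation_Psi:
  assumes vortices_outside: "\<forall>l\<in>{1..n}. \<forall>j\<in>{1..K}. cmod (zs l - c j) > R j"
    and "N \<ge> 1" "k \<in> {1..K}"
  shows "has_circulation (Psi c R K n zs G Ginf Gc N) (c k) (R k)
           ((\<Sum>i\<in>{1..K}. Amat K k i * Gc i) - ((\<Sum>l\<in>{1..n}. G l) + Ginf) / real K)"
proof -
  have K_pos: "real K > 0" using assms(3) by simp
  have vortices: "has_circulation (\<lambda>z. \<Sum>l\<in>{1..n}. G l * psi_s_star c R K N (zs l) z) (c k) (R k)
      (\<Sum>l\<in>{1..n}. G l * (-1 / real K))"
  proof (rule has_circulation_sum)
    fix l assume "l \<in> {1..n}"
    with vortices_outside have "\<forall>i\<in>{1..K}. outside_disk i (Fin (zs l))"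
      by (simp add: outside_disk_def)
    from has_circulation_psi_s_star[OF this assms(3)]
    show "has_circulation (\<lambda>z. G l * psi_s_star c R K N (zs l) z) (c k) (R k) (G l * (-1 / real K))"
      by (rule has_circulation_scale)
  qed simp
  have centers: "has_circulation (\<lambda>z. \<Sum>j\<in>{1..K}. psi_c_star c R K (Gc j) j N z) (c k) (R k)
      (\<Sum>j\<in>{1..K}. Gc j * ((if k = j then 2 else 0) - 1 / real K))"
  proof (rule has_circulation_sum)
    fix j assume "j \<in> {1..K}"
    from has_circulation_psi_c_star[OF this assms(3,2)]
    show "has_circulation (psi_c_star c R K (Gc j) j N) (c k) (R k)
        (Gc j * ((if k = j then 2 else 0) - 1 / real K))" .
  qed simp
  have circ: "has_circulation (Psi c R K n zs G Ginf Gc N) (c k) (R k)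
      ((\<Sum>l\<in>{1..n}. G l * (-1 / real K)) + - Ginf / real K
        + (\<Sum>j\<in>{1..K}. Gc j * ((if k = j then 2 else 0) - 1 / real K)))"
    using has_circulation_add[OF has_circulation_add[OF vortices
        has_circulation_psi_inf_star[OF assms(3), of Ginf N]] centers]
    by (rule has_circulation_cong) (simp_all add: Psi_def)
  have "(\<Sum>j\<in>{1..K}. Gc j * ((if k = j then 2 else 0) - 1 / real K)) =
      (\<Sum>i\<in>{1..K}. Amat K k i * Gc i)"
    by (intro sum.cong) (auto simp: Amat_def field_simps)
  then have "(\<Sum>l\<in>{1..n}. G l * (-1 / real K)) + - Ginf / real K
        + (\<Sum>j\<in>{1..K}. Gc j * ((if k = j then 2 else 0) - 1 / real K)) =
      (\<Sum>i\<in>{1..K}. Amat K k i * Gc i) - ((\<Sum>l\<in>{1..n}. G l) + Ginf) / real K"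
    using K_pos by (simp add: sum_negf field_simps flip: sum_divide_distrib)
  with circ show ?thesis by simp
qed

end

theorem mainTheorem9:
  fixes K n :: nat and c :: "nat \<Rightarrow> complex" and R :: "nat \<Rightarrow> real"
    and zs :: "nat \<Rightarrow> complex" and G :: "nat \<Rightarrow> real" and Ginf :: real
    and gamma :: "nat \<Rightarrow> real"
  assumes K2: "K \<ge> 2"
    and Rpos: "\<forall>j\<in>{1..K}. R j > 0"
    and disj: "\<forall>i\<in>{1..K}. \<forall>j\<in>{1..K}. i \<noteq> j \<longrightarrow> cmod (c i - c j) > R i + R j"
    and zsD: "\<forall>l\<in>{1..n}. \<forall>j\<in>{1..K}. cmod (zs l - c j) > R j"
  defines "b \<equiv> (\<lambda>j. gamma j + (\<Sum>l\<in>{1..n}. G l) / real K + Ginf / real K)"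
  shows "\<exists>Gc :: nat \<Rightarrow> real.
           (\<forall>j\<in>{1..K}. (\<Sum>i\<in>{1..K}. Amat K j i * Gc i) = b j)
         \<and> (\<forall>Gc' :: nat \<Rightarrow> real. (\<forall>j\<in>{1..K}. (\<Sum>i\<in>{1..K}. Amat K j i * Gc' i) = b j)
               \<longrightarrow> (\<forall>j\<in>{1..K}. Gc' j = Gc j))
         \<and> (\<forall>N\<ge>1. \<forall>j\<in>{1..K}. has_circulation (Psi c R K n zs G Ginf Gc N) (c j) (R j) (gamma j))"
proof -
  interpret disjoint_disks K c R
    using Rpos disj by unfold_locales auto
  have K1: "K \<ge> 1" using K2 by simp
  define Gc where "Gc j = (b j + (\<Sum>i\<in>{1..K}. b i) / real K) / 2" for j
  have solves: "\<forall>j\<in>{1..K}. (\<Sum>i\<in>{1..K}. Amat K j i * Gc i) = b j"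
    by (subst Amat_system_iff[OF K1]) (simp add: Gc_def)
  moreover have "\<forall>j\<in>{1..K}. Gc' j = Gc j"
    if "\<forall>j\<in>{1..K}. (\<Sum>i\<in>{1..K}. Amat K j i * Gc' i) = b j" for Gc'
    using that by (subst (asm) Amat_system_iff[OF K1]) (simp add: Gc_def)
  moreover have "has_circulation (Psi c R K n zs G Ginf Gc N) (c j) (R j) (gamma j)"
    if "N \<ge> 1" "j \<in> {1..K}" for N j
  proof -
    from has_circulation_Psi[OF zsD that, of G Ginf Gc] solves that
    show ?thesis by (simp add: b_def diff_divide_distrib add_divide_distrib)
  qed
  ultimately show ?thesis by blast
qed

end
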